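(* Let $d>0$ and $a\geq 7$ be integers with $\gcd(a,d)=1$, and put $s_n=\frac{n}{2}\,[2a+(n-1)d]$ for $1\leq n\leq 4$, i.e. $s_1=a$, $s_2=2a+d$, $s_3=3a+3d$, $s_4=4a+6d$. Then $\{s_1,s_2,s_3,s_4\}$ is a minimal system of generators of the numerical semigroup $\Gamma_4=\langle s_1,s_2,s_3,s_4\rangle$ (no $s_j$ is a nonnegative integer combination of the others).
   Context: A numerical semigroup is a submonoid of $(\mathbb{N},+)$ with finite complement; it has a unique minimal system of generators. *)

theory Defs
  imports Main
begin

inductive_set monoid_gen :: "nat set \<Rightarrow> nat set" for A :: "nat set" where
  zero: "0 \<in> monoid_gen A"
| add: "x \<in> A \<Longrightarrow> y \<in> monoid_gen A \<Longrightarrow> x + y \<in> monoid_gen A"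

definition minimal_system_of_generators :: "nat set \<Rightarrow> bool" where
  "minimal_system_of_generators A \<longleftrightarrow> (\<forall>x\<in>A. x \<notin> monoid_gen (A - {x}))"

text \<open>s_n = n/2 (2a + (n-1)d); the product is always even.\<close>
definition s_term :: "nat \<Rightarrow> nat \<Rightarrow> nat \<Rightarrow> nat" where
  "s_term a d n = n * (2 * a + (n - 1) * d) div 2"

end

theory Submission
  imports Defs
begin

text \<open>Each s_j has the form x a + y d. Since a and d are coprime, two such forms whose
  d-coefficients differ by less than a have equal coefficients. A combination of the other
  generators that does not exceed s_j has its d-coefficient within 6 of that of s_j, so its
  coefficients would have to match those of s_j, which they cannot. The d-coefficient 6 of
  s_4 is why a \<ge> 7 is needed.\<close>

lemma monoid_gen_three_imp_combination:
  assumes "x \<in> monoid_gen {p, q, r}"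
  shows "\<exists>i j k. x = i * p + j * q + k * r"
  using assms
proof (induction rule: monoid_gen.induct)
  case zero
  show ?case by (rule exI[of _ 0]) simp
next
  case (add x y)
  then obtain i j k where y: "y = i * p + j * q + k * r" by blast
  from add(1) consider "x = p" | "x = q" | "x = r" by blast
  then show ?case
  proof cases
    case 1 then show ?thesis using y by (intro exI[of _ "Suc i"] exI[of _ j] exI[of _ k]) simp
  next
    case 2 then show ?thesis using y by (intro exI[of _ i] exI[of _ "Suc j"] exI[of _ k]) simp
  next
    case 3 then show ?thesis using y by (intro exI[of _ i] exI[of _ j] exI[of _ "Suc k"]) simp
  qed
qed

lemma coprime_lincomb_eq_imp_eq:
  fixes a d x y x' y' :: nat
  assumes "coprime a d" and eq: "x * a + y * d = x' * a + y' * d"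
    and "y < y' + a" and "y' < y + a"
  shows "x = x' \<and> y = y'"
proof -
  have "(int y - int y') * int d = (int x' - int x) * int a"
    using arg_cong[OF eq, of int] by (simp add: algebra_simps)
  then have "int a dvd (int y - int y') * int d" by (metis dvd_triv_right)
  moreover have "coprime (int a) (int d)" using assms(1) by simp
  ultimately have dvd: "int a dvd int y - int y'" by (simp add: coprime_dvd_mult_left_iff)
  have "y = y'"
  proof (rule ccontr)
    assume "y \<noteq> y'"
    then have "\<bar>int a\<bar> \<le> \<bar>int y - int y'\<bar>" using dvd by (intro dvd_imp_le_int) simp_all
    then show False using assms(3,4) by linarith
  qed
  moreover have "a > 0" using assms(3) \<open>y = y'\<close> by simp
  ultimately show ?thesis using eq by simp
qed

lemma s_term_values:
  "s_term a d (Suc 0) = a" "s_term a d 2 = 2 * a + d"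
  "s_term a d 3 = 3 * a + 3 * d" "s_term a d 4 = 4 * a + 6 * d"
  unfolding s_term_def by simp_all

lemma s1_notin_monoid_gen:
  fixes a d :: nat
  assumes "a > 0"
  shows "a \<notin> monoid_gen {2 * a + d, 3 * a + 3 * d, 4 * a + 6 * d}"
proof
  assume "a \<in> monoid_gen {2 * a + d, 3 * a + 3 * d, 4 * a + 6 * d}"
  then obtain i j k where e: "a = i * (2 * a + d) + j * (3 * a + 3 * d) + k * (4 * a + 6 * d)"
    by (blast dest: monoid_gen_three_imp_combination)
  have "i = 0" using e assms by (cases i) auto
  moreover have "j = 0" using e assms by (cases j) auto
  moreover have "k = 0" using e assms by (cases k) auto
  ultimately show False using e assms by simp
qed

lemma s2_notin_monoid_gen:
  fixes a d :: nat
  assumes "coprime a d" and "a > 1"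
  shows "2 * a + d \<notin> monoid_gen {a, 3 * a + 3 * d, 4 * a + 6 * d}"
proof
  assume "2 * a + d \<in> monoid_gen {a, 3 * a + 3 * d, 4 * a + 6 * d}"
  then obtain i j k where e: "2 * a + d = i * a + j * (3 * a + 3 * d) + k * (4 * a + 6 * d)"
    by (blast dest: monoid_gen_three_imp_combination)
  have "j = 0" using e assms(2) by (cases j) auto
  moreover have "k = 0" using e assms(2) by (cases k) auto
  ultimately have "2 * a + 1 * d = i * a + 0 * d" using e by simp
  then have "2 = i \<and> 1 = (0::nat)"
    by (rule coprime_lincomb_eq_imp_eq[OF assms(1)]) (use assms(2) in simp_all)
  then show False by simp
qed

lemma s3_notin_monoid_gen:
  fixes a d :: nat
  assumes "coprime a d" and "a > 3"
  shows "3 * a + 3 * d \<notin> monoid_gen {a, 2 * a + d, 4 * a + 6 * d}"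
proof
  assume "3 * a + 3 * d \<in> monoid_gen {a, 2 * a + d, 4 * a + 6 * d}"
  then obtain i j k where e: "3 * a + 3 * d = i * a + j * (2 * a + d) + k * (4 * a + 6 * d)"
    by (blast dest: monoid_gen_three_imp_combination)
  have "k = 0" using e assms(2) by (cases k) simp_all
  have "j \<le> 3"
  proof (rule ccontr)
    assume "\<not> j \<le> 3"
    then have "4 * (2 * a + d) \<le> j * (2 * a + d)" by (intro mult_le_mono1) simp
    also have "\<dots> \<le> 3 * a + 3 * d" using e by simp
    finally show False using assms(2) by simp
  qed
  have "3 * a + 3 * d = (i + 2 * j) * a + j * d" using e \<open>k = 0\<close> by (simp add: algebra_simps)
  then have "3 = i + 2 * j \<and> 3 = j"
    by (rule coprime_lincomb_eq_imp_eq[OF assms(1)]) (use \<open>j \<le> 3\<close> assms(2) in simp_all)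
  then show False by linarith
qed

lemma s4_notin_monoid_gen:
  fixes a d :: nat
  assumes "coprime a d" and "a > 6"
  shows "4 * a + 6 * d \<notin> monoid_gen {a, 2 * a + d, 3 * a + 3 * d}"
proof
  assume "4 * a + 6 * d \<in> monoid_gen {a, 2 * a + d, 3 * a + 3 * d}"
  then obtain i j k where "4 * a + 6 * d = i * a + j * (2 * a + d) + k * (3 * a + 3 * d)"
    by (blast dest: monoid_gen_three_imp_combination)
  then have e: "4 * a + 6 * d = (i + 2 * j + 3 * k) * a + (j + 3 * k) * d"
    by (simp add: algebra_simps)
  have "j + 3 * k \<le> 6"
  proof (rule ccontr)
    assume "\<not> j + 3 * k \<le> 6"
    then have "5 * a + 6 * d \<le> (i + 2 * j + 3 * k) * a + (j + 3 * k) * d"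
      by (intro add_mono mult_le_mono1) simp_all
    then show False using e assms(2) by simp
  qed
  then have "4 = i + 2 * j + 3 * k \<and> 6 = j + 3 * k"
    by (intro coprime_lincomb_eq_imp_eq[OF assms(1) e]) (use assms(2) in simp_all)
  then show False by linarith
qed

lemma minimal_system_of_generators_image:
  assumes "inj_on f I" and "\<forall>j\<in>I. f j \<notin> monoid_gen (f ` (I - {j}))"
  shows "minimal_system_of_generators (f ` I)"
  unfolding minimal_system_of_generators_def
proof
  fix x assume "x \<in> f ` I"
  then obtain j where j: "j \<in> I" "x = f j" by blast
  then have "f ` I - {x} = f ` (I - {j})" using assms(1) by (simp add: inj_on_image_set_diff)
  then show "x \<notin> monoid_gen (f ` I - {x})" using assms(2) j by simp
qed

theorem theorem2p1:
  fixes a d :: nat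
  assumes "d > 0" and "a \<ge> 7" and "gcd a d = 1"
  shows "inj_on (s_term a d) {1..4} \<and>
         minimal_system_of_generators (s_term a d ` {1..4}) \<and>
         (\<forall>j\<in>{1..4::nat}. s_term a d j \<notin> monoid_gen (s_term a d ` ({1..4} - {j})))"
proof -
  have cop: "coprime a d" using assms(3) by (simp add: coprime_iff_gcd_eq_1)
  have range: "{1..4::nat} = {1, 2, 3, 4}" by auto
  have inj: "inj_on (s_term a d) {1..4}"
    unfolding range inj_on_def using assms(1) by (auto simp: s_term_values)
  have indep: "\<forall>j\<in>{1..4::nat}. s_term a d j \<notin> monoid_gen (s_term a d ` ({1..4} - {j}))"
    unfolding range
    using s1_notin_monoid_gen[of a d] s2_notin_monoid_gen[OF cop]
      s3_notin_monoid_gen[OF cop] s4_notin_monoid_gen[OF cop] assms(2)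
    by (simp add: s_term_values insert_Diff_if insert_commute)
  show ?thesis
    using inj minimal_system_of_generators_image[OF inj indep] indep by (intro conjI)
qed

end
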